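(* Consider the two-dimensional map defined below and suppose there is no heterogeneity in speculative trading strategies, i.e. either $(w^F,w^C)=(1,0)$ or $(w^F,w^C)=(0,1)$. Then the map has a unique equilibrium (fixed point) $P_1=(\bar e_1,\Delta\bar y_1)$ given by $$\bar e_1=-\Omega\,\Delta\bar y,\qquad \Delta\bar y_1=\Delta y^{BP},$$ i.e. $P_1=(-\Omega\Delta y^{BP},\Delta y^{BP})$. If $w^F=1$ and $w^C=0$, then $P_1$ is locally stable. If $w^F=0$ and $w^C=1$, then $P_1$ is unstable.
   Context: The state variables are the (log) exchange rate $e_t$ and the output growth rate $\Delta y_t$, evolving according to the map $$e_t=e_{t-1}+(\mu+\rho)\left[w^F\left(-\Omega\Delta y_{t-1}-e_{t-1}\right)^3+w^C\left(e_{t-1}+\Omega\Delta y_{t-1}\right)\right],$$ $$\Delta y_t=\Delta y_{t-1}+w^{flex}\beta\left\{\Delta y^{BP}-\gamma\left[w^F\left(-\Omega\Delta y_{t-1}-e_{t-1}\right)^3+w^C\left(e_{t-1}+\Omega\Delta y_{t-1}\right)\right]-\Delta y_{t-1}\right\},$$ where $\mu>0$, $\rho>0$, $0<\beta<1$, $0<\Omega<1$, $0<w^{flex}<1$, $\Delta y^{BP}\in\mathbb{R}$ is a constant, $\gamma=\frac{(1-\theta)(\mu+\rho)}{\theta\pi}>0$ with $\theta\in(0,1)$, $\pi>0$, and $w^F,w^C\in[0,1]$ are the shares of fundamentalists and chartists with $w^F+w^C=1$. An equilibrium is a fixed point $(\bar e,\Delta\bar y)$ of this map; local stability refers to the fixed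 point of the map. *)

theory Defs
  imports "HOL-Analysis.Analysis"
begin

definition gamma_par :: "real \<Rightarrow> real \<Rightarrow> real \<Rightarrow> real \<Rightarrow> real" where
  "gamma_par \<mu> \<rho> \<theta> \<pi> = (1 - \<theta>) * (\<mu> + \<rho>) / (\<theta> * \<pi>)"

definition spec_term :: "real \<Rightarrow> real \<Rightarrow> real \<Rightarrow> real \<Rightarrow> real \<Rightarrow> real" where
  "spec_term wF wC \<Omega> e dy = wF * (- \<Omega> * dy - e) ^ 3 + wC * (e + \<Omega> * dy)"

definition exmap ::
  "real \<Rightarrow> real \<Rightarrow> real \<Rightarrow> real \<Rightarrow> real \<Rightarrow> real \<Rightarrow> real \<Rightarrow> real \<Rightarrow> real \<Rightarrow> real
   \<Rightarrow> real \<times> real \<Rightarrow> real \<times> real" where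
  "exmap \<mu> \<rho> \<beta> \<Omega> wflex dyBP \<theta> \<pi> wF wC = (\<lambda>(e, dy).
     (e + (\<mu> + \<rho>) * spec_term wF wC \<Omega> e dy,
      dy + wflex * \<beta> * (dyBP - gamma_par \<mu> \<rho> \<theta> \<pi> * spec_term wF wC \<Omega> e dy - dy)))"

definition is_fixed_point :: "('a \<Rightarrow> 'a) \<Rightarrow> 'a \<Rightarrow> bool" where
  "is_fixed_point T p \<longleftrightarrow> T p = p"

definition lyapunov_stable :: "('a::metric_space \<Rightarrow> 'a) \<Rightarrow> 'a \<Rightarrow> bool" where
  "lyapunov_stable T p \<longleftrightarrow>
     (\<forall>\<epsilon>>0. \<exists>\<delta>>0. \<forall>x. dist x p < \<delta> \<longrightarrow> (\<forall>n. dist ((T ^^ n) x) p < \<epsilon>))"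

definition locally_stable :: "('a::metric_space \<Rightarrow> 'a) \<Rightarrow> 'a \<Rightarrow> bool" where
  "locally_stable T p \<longleftrightarrow> lyapunov_stable T p \<and>
     (\<exists>\<delta>>0. \<forall>x. dist x p < \<delta> \<longrightarrow> (\<lambda>n. (T ^^ n) x) \<longlonglongrightarrow> p)"

definition unstable :: "('a::metric_space \<Rightarrow> 'a) \<Rightarrow> 'a \<Rightarrow> bool" where
  "unstable T p \<longleftrightarrow> \<not> lyapunov_stable T p"

end

theory Submission
  imports Defs
begin

(* In coordinates (x, u) centred at P1 the speculative term depends only on z = x + Omega u and
   vanishes exactly when z = 0, which forces every fixed point to be P1.

   With chartists only, the map is linear and its characteristic polynomial is negative at 1, so
   there is an eigenvalue greater than 1 and orbits along the corresponding eigenvector escape.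

   With fundamentalists only, the linearisation at P1 has the eigenvalue 1, so stability comes from
   the cubic term. The weighted max-norm V(x, u) = max |x| (2 Omega |u|) decreases along orbits
   near P1 by at least c V^3: the u-part contracts linearly, and whenever |x| is close to V the
   cubic correction has the sign of x and size of order V^3. A Lyapunov function with such a
   decrement gives stability, and monotone convergence of V along orbits forces V to tend to 0. *)

lemma funpow_translate_conj:
  fixes T F :: "'a::real_normed_vector \<Rightarrow> 'a"
  assumes "\<And>q. T (p + q) = p + F q"
  shows "(T ^^ n) (p + q) = p + (F ^^ n) q"
  using assms by (induction n) simp_all

lemma all_translate: "(\<forall>x::'a::ab_group_add. P x) \<longleftrightarrow> (\<forall>y. P (p + y))"
  by (auto, metis add.commute diff_add_cancel)

lemma lyapunov_stable_translate:
  fixes T F :: "'a::real_normed_vector \<Rightarrow> 'a"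
  assumes "\<And>q. T (p + q) = p + F q"
  shows "lyapunov_stable T p \<longleftrightarrow> lyapunov_stable F 0"
  unfolding lyapunov_stable_def
  by (subst all_translate[of _ p])
    (simp add: funpow_translate_conj[where T = T and F = F, OF assms] dist_norm)

lemma locally_stable_translate:
  fixes T F :: "'a::real_normed_vector \<Rightarrow> 'a"
  assumes "\<And>q. T (p + q) = p + F q"
  shows "locally_stable T p \<longleftrightarrow> locally_stable F 0"
  unfolding locally_stable_def lyapunov_stable_translate[where T = T and F = F, OF assms]
  by (subst all_translate[of _ p])
    (simp add: funpow_translate_conj[where T = T and F = F, OF assms] dist_norm
      tendsto_add_const_iff[where d = 0, simplified])

lemma decrement_sequence_tendsto_zero:
  fixes s :: "nat \<Rightarrow> real" and h :: "real \<Rightarrow> real"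
  assumes "\<And>n. 0 \<le> s n" and "\<And>n. s (Suc n) \<le> s n - h (s n)"
    and "\<And>x. isCont h x" and "\<And>x. 0 \<le> x \<Longrightarrow> 0 \<le> h x" and "\<And>x. 0 < x \<Longrightarrow> 0 < h x"
  shows "s \<longlonglongrightarrow> 0"
proof -
  have "decseq s"
  proof (rule decseq_SucI)
    show "s (Suc n) \<le> s n" for n
      using assms(2)[of n] assms(4)[OF assms(1)[of n]] by linarith
  qed
  then obtain L where L: "s \<longlonglongrightarrow> L"
    using decseq_convergent[of s 0] assms(1) by blast
  have "0 \<le> L"
    using L assms(1) by (intro LIMSEQ_le_const) auto
  have "(\<lambda>n. s n - h (s n)) \<longlonglongrightarrow> L - h L"
    using L assms(3) by (intro tendsto_diff isCont_tendsto_compose[of L h])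
  then have "L \<le> L - h L"
    using LIMSEQ_Suc[OF L] assms(2) by (intro LIMSEQ_le) auto
  with \<open>0 \<le> L\<close> assms(5)[of L] have "L = 0"
    by linarith
  with L show ?thesis by simp
qed

lemma locally_stable_origin_by_lyapunov_function:
  fixes F :: "'a::real_normed_vector \<Rightarrow> 'a" and V :: "'a \<Rightarrow> real" and h :: "real \<Rightarrow> real"
  assumes norm_le_V: "\<And>q. norm q \<le> C * V q" and V_le_norm: "\<And>q. V q \<le> M * norm q"
    and "0 < C" and "0 < M" and "0 < r"
    and decrease: "\<And>q. V q \<le> r \<Longrightarrow> V (F q) \<le> V q - h (V q)"
    and "\<And>x. isCont h x" and h_nonneg: "\<And>x. 0 \<le> x \<Longrightarrow> 0 \<le> h x" and "\<And>x. 0 < x \<Longrightarrow> 0 < h x"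
  shows "locally_stable F 0"
proof -
  have V_nonneg: "0 \<le> V q" for q
  proof -
    have "0 \<le> C * V q"
      using norm_le_V[of q] norm_ge_zero order_trans by blast
    with \<open>0 < C\<close> show ?thesis
      by (simp add: zero_le_mult_iff)
  qed
  have bounded: "V ((F ^^ n) q) \<le> V q" if "V q \<le> r" for n q
  proof (induction n)
    case (Suc n)
    with that have "V ((F ^^ n) q) \<le> r"
      by linarith
    then have "V (F ((F ^^ n) q)) \<le> V ((F ^^ n) q) - h (V ((F ^^ n) q))"
      by (rule decrease)
    moreover have "0 \<le> h (V ((F ^^ n) q))"
      by (rule h_nonneg[OF V_nonneg])
    ultimately show ?case
      using Suc.IH by simp
  qed simp
  have step: "V ((F ^^ Suc n) q) \<le> V ((F ^^ n) q) - h (V ((F ^^ n) q))" if "V q \<le> r" for n q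
    using decrease[of "(F ^^ n) q"] bounded[OF that, of n] that by simp
  have lyapunov: "lyapunov_stable F 0"
    unfolding lyapunov_stable_def
  proof (intro allI impI)
    fix \<epsilon> :: real
    assume "0 < \<epsilon>"
    show "\<exists>\<delta>>0. \<forall>q. dist q 0 < \<delta> \<longrightarrow> (\<forall>n. dist ((F ^^ n) q) 0 < \<epsilon>)"
    proof (intro exI[of _ "min r (\<epsilon> / C) / M"] conjI allI impI)
      fix q :: 'a and n :: nat
      assume "dist q 0 < min r (\<epsilon> / C) / M"
      then have "M * norm q < min r (\<epsilon> / C)"
        using \<open>0 < M\<close> by (simp add: pos_less_divide_eq mult.commute)
      then have "V q < min r (\<epsilon> / C)"
        using V_le_norm[of q] by linarith
      then have "C * V ((F ^^ n) q) < C * (\<epsilon> / C)"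
        using bounded[of q n] \<open>0 < C\<close> by (intro mult_strict_left_mono) auto
      then show "dist ((F ^^ n) q) 0 < \<epsilon>"
        using norm_le_V[of "(F ^^ n) q"] \<open>0 < C\<close> by simp
    qed (use \<open>0 < r\<close> \<open>0 < \<epsilon>\<close> \<open>0 < C\<close> \<open>0 < M\<close> in auto)
  qed
  have "(\<lambda>n. (F ^^ n) q) \<longlonglongrightarrow> 0" if "dist q 0 < r / M" for q
  proof -
    have "M * norm q < r"
      using that \<open>0 < M\<close> by (simp add: pos_less_divide_eq mult.commute)
    then have "V q \<le> r"
      using V_le_norm[of q] by linarith
    then have "(\<lambda>n. V ((F ^^ n) q)) \<longlonglongrightarrow> 0"
      using decrement_sequence_tendsto_zero[of "\<lambda>n. V ((F ^^ n) q)" h] step V_nonneg assms(7-9)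
      by blast
    then have "(\<lambda>n. C * V ((F ^^ n) q)) \<longlonglongrightarrow> 0"
      by (simp add: tendsto_mult_right_zero)
    moreover have "\<forall>\<^sub>F n in sequentially. norm ((F ^^ n) q) \<le> C * V ((F ^^ n) q)"
      using norm_le_V by simp
    ultimately show ?thesis
      by (rule Lim_null_comparison[rotated])
  qed
  then show ?thesis
    unfolding locally_stable_def using lyapunov \<open>0 < r\<close> \<open>0 < M\<close>
    by (intro conjI exI[of _ "r / M"]) auto
qed

lemma not_lyapunov_stable_by_expanding_eigenvector:
  fixes F :: "'a::real_normed_vector \<Rightarrow> 'a"
  assumes "w \<noteq> 0" and "1 < \<bar>l\<bar>" and eigen: "\<And>c. F (c *\<^sub>R w) = (l * c) *\<^sub>R w"
  shows "\<not> lyapunov_stable F 0"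
proof
  assume "lyapunov_stable F 0"
  then obtain \<delta> where "0 < \<delta>" and \<delta>: "\<And>q n. dist q 0 < \<delta> \<Longrightarrow> dist ((F ^^ n) q) 0 < 1"
    unfolding lyapunov_stable_def by (meson zero_less_one)
  define c where "c = \<delta> / (2 * norm w)"
  have iter: "(F ^^ n) (c *\<^sub>R w) = (l ^ n * c) *\<^sub>R w" for n
    by (induction n) (simp_all add: eigen mult.assoc)
  have norm_cw: "norm (c *\<^sub>R w) = \<delta> / 2"
    using \<open>w \<noteq> 0\<close> \<open>0 < \<delta>\<close> by (simp add: c_def)
  obtain n where "2 / \<delta> < \<bar>l\<bar> ^ n"
    using real_arch_pow[OF \<open>1 < \<bar>l\<bar>\<close>] by blast
  then have "1 < \<bar>l\<bar> ^ n * (\<delta> / 2)"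
    using \<open>0 < \<delta>\<close> by (simp add: field_simps)
  also have "\<dots> = dist ((F ^^ n) (c *\<^sub>R w)) 0"
    using norm_cw by (simp add: iter mult.assoc power_abs abs_mult)
  finally show False
    using \<delta>[of "c *\<^sub>R w" n] norm_cw \<open>0 < \<delta>\<close> by simp
qed

lemma quadratic_has_root_gt_one:
  fixes b c :: real
  assumes "1 + b + c < 0"
  obtains l where "1 < l" and "l\<^sup>2 + b * l + c = 0"
proof -
  define D where "D = b\<^sup>2 - 4 * c"
  have "(2 + b)\<^sup>2 < D"
    using assms by (simp add: D_def power2_eq_square algebra_simps)
  then have "2 + b < sqrt D"
    using real_sqrt_less_mono by fastforce
  then have "1 < (- b + sqrt D) / 2"
    by (simp add: field_simps)
  moreover have "0 \<le> D"
    using \<open>(2 + b)\<^sup>2 < D\<close> zero_le_power2[of "2 + b"] by linarith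
  then have "((- b + sqrt D) / 2)\<^sup>2 + b * ((- b + sqrt D) / 2) + c = 0"
    by (simp add: D_def power2_eq_square field_simps)
  ultimately show ?thesis
    using that by blast
qed

lemma planar_linear_map_not_lyapunov_stable:
  fixes \<alpha> \<beta> \<gamma> \<delta> :: real
  assumes "\<beta> \<noteq> 0" and "(1 - \<alpha>) * (1 - \<delta>) < \<beta> * \<gamma>"
  shows "\<not> lyapunov_stable (\<lambda>(x, u). (\<alpha> * x + \<beta> * u, \<gamma> * x + \<delta> * u)) 0"
proof -
  obtain l where "1 < l" and char: "l\<^sup>2 - (\<alpha> + \<delta>) * l + (\<alpha> * \<delta> - \<beta> * \<gamma>) = 0"
    using quadratic_has_root_gt_one[of "- (\<alpha> + \<delta>)" "\<alpha> * \<delta> - \<beta> * \<gamma>"] assms(2)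
    by (auto simp: algebra_simps)
  have "\<gamma> * \<beta> + \<delta> * (l - \<alpha>) = l * (l - \<alpha>)"
    using char by (simp add: power2_eq_square algebra_simps)
  then have "\<gamma> * (c * \<beta>) + \<delta> * (c * (l - \<alpha>)) = l * c * (l - \<alpha>)" for c
    by (metis (no_types, lifting) distrib_left mult.assoc mult.left_commute)
  moreover have "\<alpha> * (c * \<beta>) + \<beta> * (c * (l - \<alpha>)) = l * c * \<beta>" for c
    by (simp add: algebra_simps)
  ultimately have "(\<lambda>(x, u). (\<alpha> * x + \<beta> * u, \<gamma> * x + \<delta> * u)) (c *\<^sub>R (\<beta>, l - \<alpha>))
      = (l * c) *\<^sub>R (\<beta>, l - \<alpha>)" for c
    by simp
  then show ?thesis
    using assms(1) \<open>1 < l\<close>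
    by (intro not_lyapunov_stable_by_expanding_eigenvector[where w = "(\<beta>, l - \<alpha>)" and l = l])
      (auto simp: zero_prod_def)
qed

(* Here x + y has the sign of x and lies in [t/4, 2 x], so the cubic term pushes x towards 0
   by at least k t^3 / 64 without overshooting it. *)
lemma cubic_step_dominant:
  fixes x y t k :: real
  assumes "3/4 * t \<le> x" and "x \<le> t" and "\<bar>y\<bar> \<le> t/2" and "0 \<le> k" and "8 * k * t\<^sup>2 \<le> 1"
  shows "\<bar>x - k * (x + y)^3\<bar> \<le> t - k/64 * t^3"
proof -
  have "0 \<le> t"
    using assms(3) by linarith
  have lower: "t/4 \<le> x + y" and upper: "x + y \<le> 2 * x"
    using assms(1-3) by (auto simp: abs_le_iff)
  have "k * (t/4)^3 \<le> k * (x + y)^3"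
    using lower \<open>0 \<le> t\<close> assms(4) by (intro mult_left_mono power_mono) auto
  then have "k/64 * t^3 \<le> k * (x + y)^3"
    by (simp add: power_divide)
  moreover have "k * (x + y)^3 \<le> k * (2 * x)^3"
    using lower upper \<open>0 \<le> t\<close> assms(4) by (intro mult_left_mono power_mono) auto
  moreover have "k * (2 * x)^3 \<le> x"
  proof -
    have "x\<^sup>2 \<le> t\<^sup>2"
      using assms(1,2) \<open>0 \<le> t\<close> by (intro power_mono) auto
    then have "8 * k * x\<^sup>2 \<le> 8 * k * t\<^sup>2"
      using assms(4) by (intro mult_left_mono) auto
    then have "x * (8 * k * x\<^sup>2) \<le> x * 1"
      using assms(1,5) \<open>0 \<le> t\<close> by (intro mult_left_mono) auto
    then show ?thesis
      by (simp add: power2_eq_square power3_eq_cube algebra_simps)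
  qed
  ultimately have "0 \<le> x - k * (x + y)^3" and "x - k * (x + y)^3 \<le> t - k/64 * t^3"
    using assms(2) by linarith+
  then show ?thesis
    by simp
qed

lemma cubic_step_bound:
  fixes x y t k :: real
  assumes "\<bar>x\<bar> \<le> t" and "\<bar>y\<bar> \<le> t/2" and "0 \<le> k" and "36 * k * t\<^sup>2 \<le> 1"
  shows "\<bar>x - k * (x + y)^3\<bar> \<le> t - k/64 * t^3"
proof -
  have "0 \<le> t"
    using assms(2) by linarith
  have "0 \<le> k * t\<^sup>2"
    using assms(3) by simp
  then have small: "8 * k * t\<^sup>2 \<le> 1"
    using assms(4) by linarith
  consider "3/4 * t \<le> x" | "3/4 * t \<le> - x" | "\<bar>x\<bar> < 3/4 * t"
    by linarith
  then show ?thesis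
  proof cases
    case 1
    then show ?thesis
      using cubic_step_dominant[OF 1 _ assms(2,3) small] assms(1) by simp
  next
    case 2
    have "\<bar>-x - k * (-x + -y)^3\<bar> \<le> t - k/64 * t^3"
      using cubic_step_dominant[OF 2 _ _ assms(3) small, of "-y"] assms(1,2) by simp
    moreover have "-x - k * (-x + -y)^3 = - (x - k * (x + y)^3)"
      by (simp add: power3_eq_cube algebra_simps)
    ultimately show ?thesis
      by simp
  next
    case 3
    have "\<bar>x + y\<bar> \<le> 2 * t"
      using assms(1,2) by linarith
    then have "\<bar>x + y\<bar>^3 \<le> (2 * t)^3"
      by (intro power_mono) auto
    then have "\<bar>k * (x + y)^3\<bar> \<le> k * (8 * t^3)"
      using assms(3) by (simp add: abs_mult power_abs mult_left_mono)
    moreover have "t * (36 * k * t\<^sup>2) \<le> t * 1"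
      using assms(4) \<open>0 \<le> t\<close> by (intro mult_left_mono) auto
    then have "36 * (k * t^3) \<le> t"
      by (simp add: power2_eq_square power3_eq_cube algebra_simps)
    moreover have "0 \<le> k * t^3"
      using assms(3) \<open>0 \<le> t\<close> by simp
    ultimately show ?thesis
      using 3 abs_triangle_ineq4[of x "k * (x + y)^3"] by linarith
  qed
qed

lemma cubic_feedback_step_bound:
  fixes x u t a g \<Omega> :: real
  assumes "\<bar>x\<bar> \<le> t" and "2 * \<Omega> * \<bar>u\<bar> \<le> t" and "0 \<le> a" and "a \<le> 1" and "0 \<le> g" and "0 \<le> \<Omega>"
    and "32 * \<Omega> * g * t\<^sup>2 \<le> 1"
  shows "2 * \<Omega> * \<bar>(1 - a) * u + a * g * (x + \<Omega> * u)^3\<bar> \<le> (1 - a/2) * t"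
proof -
  have "0 \<le> t"
    using assms(1) by linarith
  have "\<bar>x + \<Omega> * u\<bar> \<le> 2 * t"
    using assms(1,2,6) abs_triangle_ineq[of x "\<Omega> * u"] by (simp add: abs_mult)
  then have cube: "\<bar>x + \<Omega> * u\<bar>^3 \<le> 8 * t^3"
    using power_mono[of "\<bar>x + \<Omega> * u\<bar>" "2 * t" 3] by simp
  have "2 * \<Omega> * \<bar>(1 - a) * u + a * g * (x + \<Omega> * u)^3\<bar>
      \<le> 2 * \<Omega> * ((1 - a) * \<bar>u\<bar> + a * g * \<bar>x + \<Omega> * u\<bar>^3)"
    using assms(3-6) abs_triangle_ineq[of "(1 - a) * u" "a * g * (x + \<Omega> * u)^3"]
    by (intro mult_left_mono) (auto simp: abs_mult power_abs)
  also have "\<dots> = (1 - a) * (2 * \<Omega> * \<bar>u\<bar>) + a * (2 * \<Omega> * g * \<bar>x + \<Omega> * u\<bar>^3)"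
    by (simp add: algebra_simps)
  also have "\<dots> \<le> (1 - a) * t + a * (2 * \<Omega> * g * (8 * t^3))"
    using assms cube by (intro add_mono mult_left_mono) auto
  also have "\<dots> = (1 - a) * t + a * (t * (32 * \<Omega> * g * t\<^sup>2) / 2)"
    by (simp add: power2_eq_square power3_eq_cube)
  also have "\<dots> \<le> (1 - a) * t + a * (t / 2)"
    using assms(3) mult_left_le[OF assms(7) \<open>0 \<le> t\<close>]
    by (intro add_left_mono mult_left_mono) (auto simp: mult_ac)
  finally show ?thesis
    by (simp add: algebra_simps)
qed

(* The map with w^F = 1 in the coordinates (x, u) = (e, dy) - P1, where k = mu + rho,
   a = w^flex beta and g = gamma. *)
definition fundamentalist_deviation_map ::
    "real \<Rightarrow> real \<Rightarrow> real \<Rightarrow> real \<Rightarrow> real \<times> real \<Rightarrow> real \<times> real" where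
  "fundamentalist_deviation_map k a g \<Omega> =
     (\<lambda>(x, u). (x - k * (x + \<Omega> * u)^3, (1 - a) * u + a * g * (x + \<Omega> * u)^3))"

definition weighted_max_norm :: "real \<Rightarrow> real \<times> real \<Rightarrow> real" where
  "weighted_max_norm \<Omega> = (\<lambda>(x, u). max \<bar>x\<bar> (2 * \<Omega> * \<bar>u\<bar>))"

lemma norm_le_weighted_max_norm:
  assumes "0 < \<Omega>"
  shows "norm q \<le> (1 + 1 / (2 * \<Omega>)) * weighted_max_norm \<Omega> q"
proof (cases q)
  case (Pair x u)
  have "\<bar>u\<bar> \<le> weighted_max_norm \<Omega> q / (2 * \<Omega>)"
    using assms by (simp add: Pair weighted_max_norm_def pos_le_divide_eq mult.commute)
  moreover have "\<bar>x\<bar> \<le> weighted_max_norm \<Omega> q"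
    by (simp add: Pair weighted_max_norm_def)
  ultimately show ?thesis
    using norm_Pair_le[of x u] by (simp add: Pair algebra_simps)
qed

lemma weighted_max_norm_le_norm:
  assumes "0 \<le> \<Omega>"
  shows "weighted_max_norm \<Omega> q \<le> (1 + 2 * \<Omega>) * norm q"
proof (cases q)
  case (Pair x u)
  have "\<bar>x\<bar> \<le> norm q" and "\<bar>u\<bar> \<le> norm q"
    using norm_fst_le[of x u] norm_snd_le[of u x] by (simp_all add: Pair)
  moreover have "0 \<le> \<Omega> * norm q" and "\<Omega> * \<bar>u\<bar> \<le> \<Omega> * norm q"
    using assms \<open>\<bar>u\<bar> \<le> norm q\<close> by (simp_all add: mult_left_mono)
  ultimately have "\<bar>x\<bar> \<le> (1 + 2 * \<Omega>) * norm q" and "2 * \<Omega> * \<bar>u\<bar> \<le> (1 + 2 * \<Omega>) * norm q"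
    by (simp_all add: algebra_simps)
  then show ?thesis
    by (simp add: Pair weighted_max_norm_def)
qed

lemma weighted_max_norm_fundamentalist_decrease:
  fixes k a g \<Omega> :: real
  assumes "0 \<le> k" and "0 \<le> a" and "a \<le> 1" and "0 \<le> g" and "0 \<le> \<Omega>"
    and small: "36 * (k + \<Omega> * g) * (weighted_max_norm \<Omega> q)\<^sup>2 \<le> 1"
  defines "t \<equiv> weighted_max_norm \<Omega> q"
  shows "weighted_max_norm \<Omega> (fundamentalist_deviation_map k a g \<Omega> q) \<le> t - a * k / 64 * t^3"
proof (cases q)
  case (Pair x u)
  have x: "\<bar>x\<bar> \<le> t" and u: "2 * \<Omega> * \<bar>u\<bar> \<le> t"
    by (simp_all add: t_def Pair weighted_max_norm_def)
  have "0 \<le> t"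
    using x by linarith
  have "0 \<le> k * t\<^sup>2" and "0 \<le> \<Omega> * g * t\<^sup>2"
    using assms(1,4,5) by simp_all
  then have small_k: "36 * k * t\<^sup>2 \<le> 1" and small_g: "32 * \<Omega> * g * t\<^sup>2 \<le> 1"
    using small unfolding t_def[symmetric] by (simp_all add: algebra_simps)
  have "0 \<le> k * t^3"
    using assms(1) \<open>0 \<le> t\<close> by simp
  then have "a * k / 64 * t^3 \<le> k / 64 * t^3"
    using mult_left_le_one_le[OF _ assms(2,3), of "k * t^3"] by (simp add: mult.assoc)
  moreover have "\<bar>\<Omega> * u\<bar> \<le> t / 2"
    using u assms(5) by (simp add: abs_mult)
  ultimately have "\<bar>x - k * (x + \<Omega> * u)^3\<bar> \<le> t - a * k / 64 * t^3"
    using cubic_step_bound[OF x _ assms(1) small_k] by fastforce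
  moreover have "a * k / 64 * t^3 \<le> a * t / 2"
  proof -
    have "t * (k * t\<^sup>2) \<le> t * 32"
      using small_k \<open>0 \<le> t\<close> by (intro mult_left_mono) auto
    then show ?thesis
      using assms(2) by (simp add: power2_eq_square power3_eq_cube mult_left_mono algebra_simps)
  qed
  then have "2 * \<Omega> * \<bar>(1 - a) * u + a * g * (x + \<Omega> * u)^3\<bar> \<le> t - a * k / 64 * t^3"
    using cubic_feedback_step_bound[OF x u assms(2-5) small_g] by (simp add: algebra_simps)
  ultimately show ?thesis
    by (simp add: Pair fundamentalist_deviation_map_def weighted_max_norm_def)
qed

lemma fundamentalist_deviation_map_locally_stable:
  fixes k a g \<Omega> :: real
  assumes "0 < k" and "0 < a" and "a < 1" and "0 < g" and "0 < \<Omega>"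
  shows "locally_stable (fundamentalist_deviation_map k a g \<Omega>) 0"
proof -
  define r where "r = 1 / (6 * sqrt (k + \<Omega> * g))"
  have "0 < k + \<Omega> * g"
    using assms by (simp add: add_pos_pos)
  then have "0 < r" and r_small: "36 * (k + \<Omega> * g) * r\<^sup>2 = 1"
    by (simp_all add: r_def power_divide power_mult_distrib)
  have decrease: "weighted_max_norm \<Omega> (fundamentalist_deviation_map k a g \<Omega> q)
      \<le> weighted_max_norm \<Omega> q - a * k / 64 * weighted_max_norm \<Omega> q ^ 3"
    if "weighted_max_norm \<Omega> q \<le> r" for q
  proof -
    have "0 \<le> weighted_max_norm \<Omega> q"
      by (simp add: weighted_max_norm_def le_max_iff_disj split: prod.split)
    then have "(weighted_max_norm \<Omega> q)\<^sup>2 \<le> r\<^sup>2"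
      using that by (intro power_mono) auto
    then have "36 * (k + \<Omega> * g) * (weighted_max_norm \<Omega> q)\<^sup>2 \<le> 1"
      using \<open>0 < k + \<Omega> * g\<close> r_small
      by (metis mult_left_mono mult_pos_pos zero_less_numeral less_imp_le)
    then show ?thesis
      using weighted_max_norm_fundamentalist_decrease assms by (simp add: less_imp_le)
  qed
  show ?thesis
    using assms
    by (intro locally_stable_origin_by_lyapunov_function[where V = "weighted_max_norm \<Omega>"
          and C = "1 + 1 / (2 * \<Omega>)" and M = "1 + 2 * \<Omega>" and h = "\<lambda>s. a * k / 64 * s ^ 3",
          OF norm_le_weighted_max_norm weighted_max_norm_le_norm _ _ \<open>0 < r\<close> decrease])
      (auto intro!: continuous_intros add_pos_pos)
qed

lemma spec_term_eq_0_iff: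
  assumes "(wF, wC) = (1, 0) \<or> (wF, wC) = (0, 1)"
  shows "spec_term wF wC \<Omega> e dy = 0 \<longleftrightarrow> e = - \<Omega> * dy"
  using assms by (auto simp: spec_term_def algebra_simps)

lemma exmap_fixed_point_iff:
  assumes "\<mu> + \<rho> \<noteq> 0" and "wflex * \<beta> \<noteq> 0" and "(wF, wC) = (1, 0) \<or> (wF, wC) = (0, 1)"
  shows "is_fixed_point (exmap \<mu> \<rho> \<beta> \<Omega> wflex dyBP \<theta> \<pi> wF wC) p \<longleftrightarrow> p = (- \<Omega> * dyBP, dyBP)"
proof (cases p)
  case (Pair e dy)
  have "is_fixed_point (exmap \<mu> \<rho> \<beta> \<Omega> wflex dyBP \<theta> \<pi> wF wC) p
      \<longleftrightarrow> spec_term wF wC \<Omega> e dy = 0 \<and> dy = dyBP"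
    using assms(1,2) by (auto simp: is_fixed_point_def exmap_def Pair mult.assoc)
  then show ?thesis
    using spec_term_eq_0_iff[OF assms(3)] by (auto simp: Pair)
qed

lemma exmap_fundamentalist_deviation:
  "exmap \<mu> \<rho> \<beta> \<Omega> wflex dyBP \<theta> \<pi> 1 0 ((- \<Omega> * dyBP, dyBP) + q)
     = (- \<Omega> * dyBP, dyBP)
       + fundamentalist_deviation_map (\<mu> + \<rho>) (wflex * \<beta>) (gamma_par \<mu> \<rho> \<theta> \<pi>) \<Omega> q"
  by (cases q)
    (simp add: exmap_def spec_term_def fundamentalist_deviation_map_def power3_eq_cube algebra_simps)

lemma exmap_chartist_deviation:
  fixes \<mu> \<rho> \<beta> \<Omega> wflex dyBP \<theta> \<pi> :: real
  defines "k \<equiv> \<mu> + \<rho>" and "a \<equiv> wflex * \<beta>" and "g \<equiv> gamma_par \<mu> \<rho> \<theta> \<pi>"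
  shows "exmap \<mu> \<rho> \<beta> \<Omega> wflex dyBP \<theta> \<pi> 0 1 ((- \<Omega> * dyBP, dyBP) + q)
     = (- \<Omega> * dyBP, dyBP)
       + (\<lambda>(x, u). ((1 + k) * x + (k * \<Omega>) * u, (- a * g) * x + (1 - a - a * g * \<Omega>) * u)) q"
  by (cases q) (simp add: exmap_def spec_term_def k_def a_def g_def algebra_simps)

lemma exmap_fundamentalist_locally_stable:
  assumes "0 < \<mu> + \<rho>" and "0 < wflex * \<beta>" and "wflex * \<beta> < 1" and "0 < gamma_par \<mu> \<rho> \<theta> \<pi>"
    and "0 < \<Omega>"
  shows "locally_stable (exmap \<mu> \<rho> \<beta> \<Omega> wflex dyBP \<theta> \<pi> 1 0) (- \<Omega> * dyBP, dyBP)"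
proof -
  have "locally_stable (exmap \<mu> \<rho> \<beta> \<Omega> wflex dyBP \<theta> \<pi> 1 0) (- \<Omega> * dyBP, dyBP)
      \<longleftrightarrow> locally_stable (fundamentalist_deviation_map (\<mu> + \<rho>) (wflex * \<beta>) (gamma_par \<mu> \<rho> \<theta> \<pi>) \<Omega>) 0"
    by (rule locally_stable_translate) (rule exmap_fundamentalist_deviation)
  with fundamentalist_deviation_map_locally_stable[OF assms] show ?thesis
    by simp
qed

lemma exmap_chartist_unstable:
  assumes "0 < \<mu> + \<rho>" and "0 < wflex * \<beta>" and "0 < \<Omega>"
  shows "unstable (exmap \<mu> \<rho> \<beta> \<Omega> wflex dyBP \<theta> \<pi> 0 1) (- \<Omega> * dyBP, dyBP)"
proof -
  define k a g where "k = \<mu> + \<rho>" and "a = wflex * \<beta>" and "g = gamma_par \<mu> \<rho> \<theta> \<pi>"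
  have "0 < k" and "0 < a"
    using assms(1,2) by (simp_all add: k_def a_def)
  have "lyapunov_stable (exmap \<mu> \<rho> \<beta> \<Omega> wflex dyBP \<theta> \<pi> 0 1) (- \<Omega> * dyBP, dyBP)
      \<longleftrightarrow> lyapunov_stable
        (\<lambda>(x, u). ((1 + k) * x + (k * \<Omega>) * u, (- a * g) * x + (1 - a - a * g * \<Omega>) * u)) 0"
    unfolding k_def a_def g_def by (rule lyapunov_stable_translate) (rule exmap_chartist_deviation)
  moreover have "(1 - (1 + k)) * (1 - (1 - a - a * g * \<Omega>)) < (k * \<Omega>) * (- a * g)"
    using \<open>0 < k\<close> \<open>0 < a\<close> by (simp add: algebra_simps)
  moreover have "k * \<Omega> \<noteq> 0"
    using \<open>0 < k\<close> assms(3) by simp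
  ultimately show ?thesis
    unfolding unstable_def using planar_linear_map_not_lyapunov_stable by blast
qed

theorem proposition1:
  fixes \<mu> \<rho> \<beta> \<Omega> wflex dyBP \<theta> \<pi> wF wC :: real
  assumes "\<mu> > 0" and "\<rho> > 0" and "0 < \<beta>" and "\<beta> < 1"
    and "0 < \<Omega>" and "\<Omega> < 1" and "0 < wflex" and "wflex < 1"
    and "0 < \<theta>" and "\<theta> < 1" and "\<pi> > 0"
    and "(wF, wC) = (1, 0) \<or> (wF, wC) = (0, 1)"
  defines "T \<equiv> exmap \<mu> \<rho> \<beta> \<Omega> wflex dyBP \<theta> \<pi> wF wC"
    and "P1 \<equiv> (- \<Omega> * dyBP, dyBP)"
  shows "(\<forall>p. is_fixed_point T p \<longleftrightarrow> p = P1)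
    \<and> ((wF, wC) = (1, 0) \<longrightarrow> locally_stable T P1)
    \<and> ((wF, wC) = (0, 1) \<longrightarrow> unstable T P1)"
proof -
  have "0 < \<mu> + \<rho>" and "0 < wflex * \<beta>" and "0 < gamma_par \<mu> \<rho> \<theta> \<pi>"
    using assms by (simp_all add: gamma_par_def)
  moreover have "wflex * \<beta> < 1"
    using mult_strict_mono[of wflex 1 \<beta> 1] assms(3,4,7,8) by simp
  moreover have "is_fixed_point T p \<longleftrightarrow> p = P1" for p
    unfolding T_def P1_def
    using \<open>0 < \<mu> + \<rho>\<close> \<open>0 < wflex * \<beta>\<close> assms(12) by (intro exmap_fixed_point_iff) auto
  ultimately show ?thesis
    using exmap_fundamentalist_locally_stable exmap_chartist_unstable assms(5)
    by (auto simp: T_def P1_def)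
qed

end
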